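(* Let $R$ be a complex superalgebra of type $(2,1)$ which is right alternative and nontrivial. Then $R$ is isomorphic to one of the following superalgebras, written in a homogeneous basis $e_1,e_2$ (even), $f_1$ (odd) by listing their nonzero products (all unlisted products of basis elements are zero): $\mathbf{R}_{01}$: $e_1e_1=e_1,\ e_2e_2=e_2$; $\mathbf{R}_{02}$: $e_1e_1=e_1,\ e_2e_2=e_2,\ e_1f_1=f_1,\ f_1e_1=f_1$; $\mathbf{R}_{03}$: $e_1e_1=e_1,\ e_2e_2=e_2,\ e_1f_1=f_1,\ f_1e_1=f_1,\ f_1f_1=e_1$; $\mathbf{R}_{04}$: $e_1e_1=e_1,\ e_2e_2=e_2,\ f_1e_1=f_1$; $\mathbf{R}_{05}$: $e_1e_1=e_1,\ e_2e_2=e_2,\ e_1f_1=f_1$; $\mathbf{R}_{06}$: $e_1e_1=e_1,\ e_2e_2=e_2,\ e_1f_1=f_1,\ f_1f_1=e_1$; $\mathbf{R}_{07}$: $e_1e_1=e_1,\ e_2e_2=e_2,\ e_2f_1=f_1,\ f_1e_1=f_1$; $\mathbf{R}_{08}$: $e_1e_1=e_1,\ e_2e_2=e_2,\ e_2f_1=f_1,\ f_1e_1=f_1,\ f_1f_1=e_2$; $\mathbf{R}_{09}$: $e_1e_1=e_1$; $\mathbf{R}_{10}$: $e_1e_1=e_1,\ f_1f_1=e_2$; $\mathbf{R}_{11}$: $e_1e_1=e_1,\ f_1e_1=f_1$; $\mathbf{R}_{12}$: $e_1e_1=e_1,\ f_1e_1=f_1,\ f_1f_1=e_2$; $\mathbf{R}_{13}$: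 $e_1e_1=e_1,\ e_1f_1=f_1$; $\mathbf{R}_{14}$: $e_1e_1=e_1,\ e_1f_1=f_1,\ f_1f_1=e_1$; $\mathbf{R}_{15}$: $e_1e_1=e_1,\ e_1f_1=f_1,\ f_1e_1=f_1$; $\mathbf{R}_{16}$: $e_1e_1=e_1,\ e_1f_1=f_1,\ f_1e_1=f_1,\ f_1f_1=e_1$; $\mathbf{R}_{17}$: $e_1e_1=e_1,\ e_1e_2=e_2,\ e_2e_1=e_2$; $\mathbf{R}_{18}$: $e_1e_1=e_1,\ e_1e_2=e_2,\ e_2e_1=e_2,\ e_1f_1=f_1$; $\mathbf{R}_{19}$: $e_1e_1=e_1,\ e_1e_2=e_2,\ e_2e_1=e_2,\ e_1f_1=f_1,\ f_1f_1=e_2$; $\mathbf{R}_{20}$: $e_1e_1=e_1,\ e_1e_2=e_2,\ e_2e_1=e_2,\ f_1e_1=f_1$; $\mathbf{R}_{21}$: $e_1e_1=e_1,\ e_1e_2=e_2,\ e_2e_1=e_2,\ e_1f_1=f_1,\ f_1e_1=f_1$; $\mathbf{R}_{22}$: $e_1e_1=e_1,\ e_1e_2=e_2,\ e_2e_1=e_2,\ e_1f_1=f_1,\ f_1e_1=f_1,\ f_1f_1=e_2$; $\mathbf{R}_{23}$: $e_1e_1=e_1,\ e_1e_2=e_2$; $\mathbf{R}_{24}$: $e_1e_1=e_1,\ e_1e_2=e_2,\ f_1f_1=e_2$; $\mathbf{R}_{25}$: $e_1e_1=e_1,\ e_2e_1=e_2$; $\mathbf{R}_{26}$: $e_1e_1=e_1,\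 e_2e_1=e_2,\ e_1f_1=f_1$; $\mathbf{R}_{27}$: $e_1e_1=e_1,\ e_2e_1=e_2,\ e_1f_1=f_1,\ f_1f_1=e_1$; $\mathbf{R}_{28}$: $e_1e_1=e_1,\ e_2e_1=e_2,\ e_1f_1=f_1,\ f_1f_1=e_2$; $\mathbf{R}_{29}$: $e_1e_1=e_1,\ e_1e_2=e_2,\ f_1e_1=f_1$; $\mathbf{R}_{30}$: $e_1e_1=e_1,\ e_1e_2=e_2,\ f_1e_1=f_1,\ f_1f_1=e_2$; $\mathbf{R}_{31}$: $e_1e_1=e_1,\ e_2e_1=e_2,\ f_1e_1=f_1$; $\mathbf{R}_{32}$: $e_1e_1=e_1,\ e_1e_2=e_2,\ e_1f_1=f_1$; $\mathbf{R}_{33}$: $e_1e_1=e_1,\ e_2e_1=e_2,\ e_1f_1=f_1,\ f_1e_1=f_1$; $\mathbf{R}_{34}$: $e_1e_1=e_1,\ e_2e_1=e_2,\ e_1f_1=f_1,\ f_1e_1=f_1,\ f_1f_1=e_1$; $\mathbf{R}_{35}$: $e_1e_1=e_1,\ e_2e_1=e_2,\ e_1f_1=f_1,\ f_1e_1=f_1,\ f_1f_1=e_2$; $\mathbf{R}_{36}$: $e_1e_1=e_1,\ e_1e_2=e_2,\ e_1f_1=f_1,\ f_1e_1=f_1$; $\mathbf{R}_{37}$: $e_1e_1=e_2$; $\mathbf{R}_{38}$: $e_1e_1=e_2,\ f_1f_1=e_2$; $\mathbf{R}_{39}$: $f_1f_1=e_1$.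
   Context: All algebras are over $\mathbb{C}$. A superalgebra is a $\mathbb{Z}_2$-graded algebra $A=A_0\oplus A_1$ with $A_iA_j\subseteq A_{i+j \bmod 2}$; for a homogeneous element $x$, $|x|\in\{0,1\}$ denotes its degree. It has type $(n,m)$ if $\dim A_0=n$ and $\dim A_1=m$. Isomorphisms of superalgebras are grading-preserving algebra isomorphisms. The associator is $(x,y,z)=(xy)z-x(yz)$. A superalgebra is right alternative if $(x,y,z)=-(-1)^{|y||z|}(x,z,y)$ for all homogeneous $x,y,z$. A superalgebra is trivial if all its products are zero. *)

theory Defs
  imports "HOL-Analysis.Analysis"
begin

text \<open>A complex superalgebra of type (2,1) is modelled on the underlying space
  complex^3 with homogeneous basis e1 = axis 1 1, e2 = axis 2 1 (even) and
  f1 = axis 3 1 (odd).\<close>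

type_synonym sv = "complex ^ 3"

definition even_part :: "sv set" where
  "even_part = {x. x $ 3 = 0}"

definition odd_part :: "sv set" where
  "odd_part = {x. x $ 1 = 0 \<and> x $ 2 = 0}"

definition homog :: "nat \<Rightarrow> sv \<Rightarrow> bool" where
  "homog d x \<longleftrightarrow> (if d = 0 then x \<in> even_part else x \<in> odd_part)"

definition c_linear :: "(sv \<Rightarrow> sv) \<Rightarrow> bool" where
  "c_linear f \<longleftrightarrow> (\<forall>x y. f (x + y) = f x + f y) \<and> (\<forall>(c::complex) x. f (c *s x) = c *s f x)"

definition c_bilinear :: "(sv \<Rightarrow> sv \<Rightarrow> sv) \<Rightarrow> bool" where
  "c_bilinear m \<longleftrightarrow> (\<forall>x. c_linear (m x)) \<and> (\<forall>y. c_linear (\<lambda>x. m x y))"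

definition superalgebra :: "(sv \<Rightarrow> sv \<Rightarrow> sv) \<Rightarrow> bool" where
  "superalgebra m \<longleftrightarrow> c_bilinear m \<and>
     (\<forall>i j x y. i < 2 \<and> j < 2 \<and> homog i x \<and> homog j y \<longrightarrow> homog ((i + j) mod 2) (m x y))"

definition assoc :: "(sv \<Rightarrow> sv \<Rightarrow> sv) \<Rightarrow> sv \<Rightarrow> sv \<Rightarrow> sv \<Rightarrow> sv" where
  "assoc m x y z = m (m x y) z - m x (m y z)"

definition right_alternative :: "(sv \<Rightarrow> sv \<Rightarrow> sv) \<Rightarrow> bool" where
  "right_alternative m \<longleftrightarrow>
     (\<forall>i j k x y z. i < 2 \<and> j < 2 \<and> k < 2 \<and> homog i x \<and> homog j y \<and> homog k z \<longrightarrow>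
        assoc m x y z = - (((-1::complex) ^ (j * k)) *s assoc m x z y))"

definition trivial :: "(sv \<Rightarrow> sv \<Rightarrow> sv) \<Rightarrow> bool" where
  "trivial m \<longleftrightarrow> (\<forall>x y. m x y = 0)"

definition super_iso :: "(sv \<Rightarrow> sv \<Rightarrow> sv) \<Rightarrow> (sv \<Rightarrow> sv \<Rightarrow> sv) \<Rightarrow> bool" where
  "super_iso m1 m2 \<longleftrightarrow> (\<exists>\<phi>. c_linear \<phi> \<and> bij \<phi> \<and>
      \<phi> ` even_part = even_part \<and> \<phi> ` odd_part = odd_part \<and>
      (\<forall>x y. \<phi> (m1 x y) = m2 (\<phi> x) (\<phi> y)))"

text \<open>A multiplication table: a list of triples (i,j,k) meaning b_i b_j = b_k for the
  basis b_1 = e1, b_2 = e2, b_3 = f1; unlisted products of basis elements are zero.\<close>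
type_synonym table = "(3 \<times> 3 \<times> 3) list"

definition mult_of :: "table \<Rightarrow> sv \<Rightarrow> sv \<Rightarrow> sv" where
  "mult_of T x y = (\<Sum>(i, j, k) \<leftarrow> T. (x $ i * y $ j) *s axis k 1)"

definition R01 :: table where
  "R01 = [(1, 1, 1), (2, 2, 2)]"

definition R02 :: table where
  "R02 = [(1, 1, 1), (2, 2, 2), (1, 3, 3), (3, 1, 3)]"

definition R03 :: table where
  "R03 = [(1, 1, 1), (2, 2, 2), (1, 3, 3), (3, 1, 3), (3, 3, 1)]"

definition R04 :: table where
  "R04 = [(1, 1, 1), (2, 2, 2), (3, 1, 3)]"

definition R05 :: table where
  "R05 = [(1, 1, 1), (2, 2, 2), (1, 3, 3)]"

definition R06 :: table where
  "R06 = [(1, 1, 1), (2, 2, 2), (1, 3, 3), (3, 3, 1)]"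

definition R07 :: table where
  "R07 = [(1, 1, 1), (2, 2, 2), (2, 3, 3), (3, 1, 3)]"

definition R08 :: table where
  "R08 = [(1, 1, 1), (2, 2, 2), (2, 3, 3), (3, 1, 3), (3, 3, 2)]"

definition R09 :: table where
  "R09 = [(1, 1, 1)]"

definition R10 :: table where
  "R10 = [(1, 1, 1), (3, 3, 2)]"

definition R11 :: table where
  "R11 = [(1, 1, 1), (3, 1, 3)]"

definition R12 :: table where
  "R12 = [(1, 1, 1), (3, 1, 3), (3, 3, 2)]"

definition R13 :: table where
  "R13 = [(1, 1, 1), (1, 3, 3)]"

definition R14 :: table where
  "R14 = [(1, 1, 1), (1, 3, 3), (3, 3, 1)]"

definition R15 :: table where
  "R15 = [(1, 1, 1), (1, 3, 3), (3, 1, 3)]"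

definition R16 :: table where
  "R16 = [(1, 1, 1), (1, 3, 3), (3, 1, 3), (3, 3, 1)]"

definition R17 :: table where
  "R17 = [(1, 1, 1), (1, 2, 2), (2, 1, 2)]"

definition R18 :: table where
  "R18 = [(1, 1, 1), (1, 2, 2), (2, 1, 2), (1, 3, 3)]"

definition R19 :: table where
  "R19 = [(1, 1, 1), (1, 2, 2), (2, 1, 2), (1, 3, 3), (3, 3, 2)]"

definition R20 :: table where
  "R20 = [(1, 1, 1), (1, 2, 2), (2, 1, 2), (3, 1, 3)]"

definition R21 :: table where
  "R21 = [(1, 1, 1), (1, 2, 2), (2, 1, 2), (1, 3, 3), (3, 1, 3)]"

definition R22 :: table where
  "R22 = [(1, 1, 1), (1, 2, 2), (2, 1, 2), (1, 3, 3), (3, 1, 3), (3, 3, 2)]"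

definition R23 :: table where
  "R23 = [(1, 1, 1), (1, 2, 2)]"

definition R24 :: table where
  "R24 = [(1, 1, 1), (1, 2, 2), (3, 3, 2)]"

definition R25 :: table where
  "R25 = [(1, 1, 1), (2, 1, 2)]"

definition R26 :: table where
  "R26 = [(1, 1, 1), (2, 1, 2), (1, 3, 3)]"

definition R27 :: table where
  "R27 = [(1, 1, 1), (2, 1, 2), (1, 3, 3), (3, 3, 1)]"

definition R28 :: table where
  "R28 = [(1, 1, 1), (2, 1, 2), (1, 3, 3), (3, 3, 2)]"

definition R29 :: table where
  "R29 = [(1, 1, 1), (1, 2, 2), (3, 1, 3)]"

definition R30 :: table where
  "R30 = [(1, 1, 1), (1, 2, 2), (3, 1, 3), (3, 3, 2)]"

definition R31 :: table where
  "R31 = [(1, 1, 1), (2, 1, 2), (3, 1, 3)]"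

definition R32 :: table where
  "R32 = [(1, 1, 1), (1, 2, 2), (1, 3, 3)]"

definition R33 :: table where
  "R33 = [(1, 1, 1), (2, 1, 2), (1, 3, 3), (3, 1, 3)]"

definition R34 :: table where
  "R34 = [(1, 1, 1), (2, 1, 2), (1, 3, 3), (3, 1, 3), (3, 3, 1)]"

definition R35 :: table where
  "R35 = [(1, 1, 1), (2, 1, 2), (1, 3, 3), (3, 1, 3), (3, 3, 2)]"

definition R36 :: table where
  "R36 = [(1, 1, 1), (1, 2, 2), (1, 3, 3), (3, 1, 3)]"

definition R37 :: table where
  "R37 = [(1, 1, 2)]"

definition R38 :: table where
  "R38 = [(1, 1, 2), (3, 3, 2)]"

definition R39 :: table where
  "R39 = [(3, 3, 1)]"

definition R_list :: "table list" where
  "R_list = [R01, R02, R03, R04, R05, R06, R07, R08, R09, R10, R11, R12, R13, R14, R15, R16, R17, R18, R19, R20, R21, R22, R23, R24, R25, R26, R27, R28, R29, R30, R31, R32, R33, R34, R35, R36, R37, R38, R39]"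

end

theory Submission
  imports Defs
begin

text \<open>The even part A is a two-dimensional algebra satisfying (x, y, y) = 0, and a change of
  basis brings it into one of seven normal forms: C + C, C + 0, the dual numbers, the two algebras
  in which an idempotent e1 acts as a one-sided unit on e2 with e2 e2 = 0, the nilpotent algebra
  with e1 e1 = e2, and the zero algebra.  The odd part is spanned by f1, so the rest of the
  structure consists of the scalars l(x), r(x) with x f1 = l(x) f1 and f1 x = r(x) f1 and of
  u = f1 f1 in A.  Right alternativity makes l a character of A, gives
  r(x y) + r(y x) = 2 r(x) r(y) and u x = l(x) u.  Over each normal form these constraints leave
  finitely many possibilities, and rescaling f1 (in two cases together with a change of basis of
  A) normalizes u to 0 or to a basis vector.\<close>

lemma superalgebra_bilinear:
  assumes "superalgebra m"
  shows "m (x + y) z = m x z + m y z" "m x (y + z) = m x y + m x z"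
    "m (c *s x) z = c *s m x z" "m x (c *s z) = c *s m x z"
  using assms unfolding superalgebra_def c_bilinear_def c_linear_def by auto

lemma superalgebra_zero:
  assumes "superalgebra m"
  shows "m 0 z = 0" "m x 0 = 0"
  using superalgebra_bilinear(3)[OF assms, of 0 0 z] superalgebra_bilinear(4)[OF assms, of x 0 0]
  by simp_all

lemma superalgebra_grading:
  assumes "superalgebra m"
  shows "x \<in> even_part \<Longrightarrow> y \<in> even_part \<Longrightarrow> m x y \<in> even_part"
    "x \<in> even_part \<Longrightarrow> y \<in> odd_part \<Longrightarrow> m x y \<in> odd_part"
    "x \<in> odd_part \<Longrightarrow> y \<in> even_part \<Longrightarrow> m x y \<in> odd_part"
    "x \<in> odd_part \<Longrightarrow> y \<in> odd_part \<Longrightarrow> m x y \<in> even_part"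
proof -
  have g: "\<And>i j x y. i < 2 \<Longrightarrow> j < 2 \<Longrightarrow> homog i x \<Longrightarrow> homog j y \<Longrightarrow>
      homog ((i + j) mod 2) (m x y)"
    using assms unfolding superalgebra_def by blast
  show "x \<in> even_part \<Longrightarrow> y \<in> even_part \<Longrightarrow> m x y \<in> even_part"
    using g[of 0 0 x y] by (simp add: homog_def)
  show "x \<in> even_part \<Longrightarrow> y \<in> odd_part \<Longrightarrow> m x y \<in> odd_part"
    using g[of 0 1 x y] by (simp add: homog_def)
  show "x \<in> odd_part \<Longrightarrow> y \<in> even_part \<Longrightarrow> m x y \<in> odd_part"
    using g[of 1 0 x y] by (simp add: homog_def)
  show "x \<in> odd_part \<Longrightarrow> y \<in> odd_part \<Longrightarrow> m x y \<in> even_part"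
    using g[of 1 1 x y] by (simp add: homog_def)
qed

lemma right_alternativeD:
  assumes "right_alternative m" and "i < 2" "j < 2" "k < 2" "homog i x" "homog j y" "homog k z"
  shows "assoc m x y z = - (((-1::complex) ^ (j * k)) *s assoc m x z y)"
  using assms unfolding right_alternative_def by blast

lemma homog_cases:
  assumes "x \<in> even_part \<or> x \<in> odd_part"
  obtains i :: nat where "i < 2" "homog i x"
proof (cases "x \<in> even_part")
  case True
  then show ?thesis using that[of 0] by (simp add: homog_def)
next
  case False
  then show ?thesis using that[of 1] assms by (simp add: homog_def)
qed

lemma right_alternative_even_even:
  assumes "right_alternative m" and "x \<in> even_part \<or> x \<in> odd_part"
    and "y \<in> even_part" and "z \<in> even_part"
  shows "assoc m x y z = - assoc m x z y"
proof -
  obtain i where "i < 2" "homog i x" using homog_cases[OF assms(2)] .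
  then show ?thesis
    using right_alternativeD[OF assms(1), of i 0 0 x y z] assms(3,4) by (simp add: homog_def)
qed

lemma right_alternative_odd_even:
  assumes "right_alternative m" and "x \<in> even_part \<or> x \<in> odd_part"
    and "y \<in> odd_part" and "z \<in> even_part"
  shows "assoc m x y z = - assoc m x z y"
proof -
  obtain i where "i < 2" "homog i x" using homog_cases[OF assms(2)] .
  then show ?thesis
    using right_alternativeD[OF assms(1), of i 1 0 x y z] assms(3,4) by (simp add: homog_def)
qed

lemma even_right_alternative:
  assumes "right_alternative m" and "x \<in> even_part" and "y \<in> even_part"
  shows "m (m x y) y = m x (m y y)"
proof -
  have "assoc m x y y = - assoc m x y y"
    using right_alternative_even_even[OF assms(1)] assms(2,3) by blast
  then have "assoc m x y y = 0"
    by (simp add: vec_eq_iff forall_3)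
  then show ?thesis
    unfolding assoc_def by simp
qed

definition det2 :: "sv \<Rightarrow> sv \<Rightarrow> complex" where
  "det2 x y = x$1 * y$2 - x$2 * y$1"

definition lcomb :: "sv \<Rightarrow> sv \<Rightarrow> complex \<Rightarrow> complex \<Rightarrow> sv" where
  "lcomb x y a b = a *s x + b *s y"

lemma lcomb_lcomb:
  "lcomb (lcomb x y a b) (lcomb x y c d) p q = lcomb x y (p * a + q * c) (p * b + q * d)"
  unfolding lcomb_def by (simp add: vec_eq_iff algebra_simps)

lemma lcomb_swap: "lcomb x y a b = lcomb y x b a"
  unfolding lcomb_def by (simp add: add.commute)

lemma lcomb_even: "x \<in> even_part \<Longrightarrow> y \<in> even_part \<Longrightarrow> lcomb x y a b \<in> even_part"
  unfolding lcomb_def even_part_def by simp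

lemma lcomb_diff: "lcomb x y a b - lcomb x y c d = lcomb x y (a - c) (b - d)"
  unfolding lcomb_def by (simp add: vec_eq_iff algebra_simps)

lemma lcomb_uminus: "- lcomb x y a b = lcomb x y (- a) (- b)"
  unfolding lcomb_def by (simp add: vec_eq_iff)

lemma det2_lcomb: "det2 (lcomb x y a b) (lcomb x y c d) = (a * d - b * c) * det2 x y"
  unfolding lcomb_def det2_def by (simp add: algebra_simps)

lemma lcomb_eq_iff:
  assumes "det2 x y \<noteq> 0"
  shows "lcomb x y a b = lcomb x y c d \<longleftrightarrow> a = c \<and> b = d"
proof
  assume "lcomb x y a b = lcomb x y c d"
  then have coord1: "(a - c) * x$1 + (b - d) * y$1 = 0" and coord2: "(a - c) * x$2 + (b - d) * y$2 = 0"
    unfolding lcomb_def by (auto simp: vec_eq_iff algebra_simps dest: spec[of _ 1] spec[of _ 2])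
  have "(a - c) * det2 x y = y$2 * ((a - c) * x$1 + (b - d) * y$1) - y$1 * ((a - c) * x$2 + (b - d) * y$2)"
    "(b - d) * det2 x y = x$1 * ((a - c) * x$2 + (b - d) * y$2) - x$2 * ((a - c) * x$1 + (b - d) * y$1)"
    unfolding det2_def by (simp_all add: algebra_simps)
  then have "(a - c) * det2 x y = 0" "(b - d) * det2 x y = 0"
    by (simp_all only: coord1 coord2 mult_zero_right diff_self)
  then show "a = c \<and> b = d" using assms by simp
qed simp

lemma lcomb_eq_0_iff:
  assumes "det2 x y \<noteq> 0"
  shows "lcomb x y a b = 0 \<longleftrightarrow> a = 0 \<and> b = 0"
  using lcomb_eq_iff[OF assms, of a b 0 0] by (simp add: lcomb_def)

lemma even_lcomb_coords:
  assumes "x \<in> even_part" "y \<in> even_part" "z \<in> even_part" "det2 x y \<noteq> 0"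
  shows "z = lcomb x y (det2 z y / det2 x y) (det2 x z / det2 x y)"
  using assms unfolding lcomb_def even_part_def
  by (simp add: vec_eq_iff forall_3 field_simps) (simp add: det2_def algebra_simps)

lemma even_in_span:
  assumes "x \<in> even_part" "y \<in> even_part" "z \<in> even_part" "det2 x y \<noteq> 0"
  obtains a b where "z = lcomb x y a b"
  using even_lcomb_coords[OF assms] by blast

definition even_frame :: "(sv \<Rightarrow> sv \<Rightarrow> sv) \<Rightarrow> sv \<Rightarrow> sv \<Rightarrow> complex \<Rightarrow> complex \<Rightarrow> complex \<Rightarrow>
    complex \<Rightarrow> complex \<Rightarrow> complex \<Rightarrow> complex \<Rightarrow> complex \<Rightarrow> bool" where
  "even_frame m x y k1 k2 k3 k4 k5 k6 k7 k8 \<longleftrightarrow>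
     x \<in> even_part \<and> y \<in> even_part \<and> det2 x y \<noteq> 0 \<and>
     m x x = lcomb x y k1 k2 \<and> m x y = lcomb x y k3 k4 \<and>
     m y x = lcomb x y k5 k6 \<and> m y y = lcomb x y k7 k8"

lemma even_frameD:
  assumes "even_frame m x y k1 k2 k3 k4 k5 k6 k7 k8"
  shows "x \<in> even_part" "y \<in> even_part" "det2 x y \<noteq> 0"
    "m x x = lcomb x y k1 k2" "m x y = lcomb x y k3 k4"
    "m y x = lcomb x y k5 k6" "m y y = lcomb x y k7 k8"
  using assms unfolding even_frame_def by simp_all

lemma even_frame_exists:
  assumes "superalgebra m" "x \<in> even_part" "y \<in> even_part" "det2 x y \<noteq> 0"
  shows "\<exists>k1 k2 k3 k4 k5 k6 k7 k8. even_frame m x y k1 k2 k3 k4 k5 k6 k7 k8"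
  unfolding even_frame_def
  using assms even_lcomb_coords[OF assms(2,3) _ assms(4)] superalgebra_grading(1)[OF assms(1)] by meson

lemma even_frame_swap:
  "even_frame m x y k1 k2 k3 k4 k5 k6 k7 k8 \<Longrightarrow> even_frame m y x k8 k7 k6 k5 k4 k3 k2 k1"
  unfolding even_frame_def det2_def lcomb_def by (auto simp: algebra_simps)

lemma even_frame_mult:
  assumes "superalgebra m" and "even_frame m x y k1 k2 k3 k4 k5 k6 k7 k8"
  shows "m (lcomb x y a b) (lcomb x y c d) =
    lcomb x y (a*c*k1 + a*d*k3 + b*c*k5 + b*d*k7) (a*c*k2 + a*d*k4 + b*c*k6 + b*d*k8)"
  using assms(2) unfolding even_frame_def
  by (simp add: lcomb_def superalgebra_bilinear[OF assms(1)]) (simp add: vec_eq_iff algebra_simps)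

lemma even_frame_change:
  assumes sa: "superalgebra m" and fr: "even_frame m x y k1 k2 k3 k4 k5 k6 k7 k8"
    and "a * d - b * c \<noteq> 0"
    and "a*a*k1 + a*b*k3 + b*a*k5 + b*b*k7 = l1 * a + l2 * c"
        "a*a*k2 + a*b*k4 + b*a*k6 + b*b*k8 = l1 * b + l2 * d"
        "a*c*k1 + a*d*k3 + b*c*k5 + b*d*k7 = l3 * a + l4 * c"
        "a*c*k2 + a*d*k4 + b*c*k6 + b*d*k8 = l3 * b + l4 * d"
        "c*a*k1 + c*b*k3 + d*a*k5 + d*b*k7 = l5 * a + l6 * c"
        "c*a*k2 + c*b*k4 + d*a*k6 + d*b*k8 = l5 * b + l6 * d"
        "c*c*k1 + c*d*k3 + d*c*k5 + d*d*k7 = l7 * a + l8 * c"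
        "c*c*k2 + c*d*k4 + d*c*k6 + d*d*k8 = l7 * b + l8 * d"
  shows "even_frame m (lcomb x y a b) (lcomb x y c d) l1 l2 l3 l4 l5 l6 l7 l8"
  using assms(3-) even_frameD[OF fr]
  unfolding even_frame_def
  by (simp add: lcomb_even det2_lcomb lcomb_lcomb even_frame_mult[OF sa fr] lcomb_eq_iff)

lemma even_frame_rescale:
  assumes "superalgebra m" and "even_frame m x y c1 0 0 0 0 0 0 c2" and "c1 \<noteq> 0" "c2 \<noteq> 0"
  shows "even_frame m (lcomb x y (1/c1) 0) (lcomb x y 0 (1/c2)) 1 0 0 0 0 0 0 1"
  by (rule even_frame_change[OF assms(1,2)]) (use assms(3,4) in \<open>simp_all add: field_simps\<close>)

lemma even_frame_assoc_antisym:
  assumes "right_alternative m" and "even_frame m x y k1 k2 k3 k4 k5 k6 k7 k8"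
  shows "assoc m (lcomb x y a1 b1) (lcomb x y a2 b2) (lcomb x y a3 b3) =
    - assoc m (lcomb x y a1 b1) (lcomb x y a3 b3) (lcomb x y a2 b2)"
  using right_alternative_even_even[OF assms(1)] lcomb_even even_frameD(1,2)[OF assms(2)] by blast

lemma even_frame_right_alternative:
  assumes "right_alternative m" and "even_frame m x y k1 k2 k3 k4 k5 k6 k7 k8"
  shows "m (m (lcomb x y a b) (lcomb x y c d)) (lcomb x y c d) =
    m (lcomb x y a b) (m (lcomb x y c d) (lcomb x y c d))"
  using even_right_alternative[OF assms(1)] lcomb_even even_frameD(1,2)[OF assms(2)] by blast

text \<open>The superalgebra with e1 e1 = k1 e1 + k2 e2, e1 e2 = k3 e1 + k4 e2, e2 e1 = k5 e1 + k6 e2,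
  e2 e2 = k7 e1 + k8 e2, e_i f1 = a_i f1, f1 e_i = c_i f1 and f1 f1 = w1 e1 + w2 e2.\<close>
definition struct_mult :: "complex \<Rightarrow> complex \<Rightarrow> complex \<Rightarrow> complex \<Rightarrow> complex \<Rightarrow> complex \<Rightarrow>
    complex \<Rightarrow> complex \<Rightarrow> complex \<Rightarrow> complex \<Rightarrow> complex \<Rightarrow> complex \<Rightarrow> complex \<Rightarrow> complex \<Rightarrow>
    sv \<Rightarrow> sv \<Rightarrow> sv" where
  "struct_mult k1 k2 k3 k4 k5 k6 k7 k8 a1 a2 c1 c2 w1 w2 x y = vector
     [x$1 * y$1 * k1 + x$1 * y$2 * k3 + x$2 * y$1 * k5 + x$2 * y$2 * k7 + x$3 * y$3 * w1,
      x$1 * y$1 * k2 + x$1 * y$2 * k4 + x$2 * y$1 * k6 + x$2 * y$2 * k8 + x$3 * y$3 * w2,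
      x$1 * y$3 * a1 + x$2 * y$3 * a2 + x$3 * y$1 * c1 + x$3 * y$2 * c2]"

lemma super_iso_struct_mult:
  assumes sa: "superalgebra m" and fr: "even_frame m X Y k1 k2 k3 k4 k5 k6 k7 k8"
    and F: "F \<in> odd_part" "F$3 \<noteq> 0"
    and prods: "m X F = a1 *s F" "m Y F = a2 *s F" "m F X = c1 *s F" "m F Y = c2 *s F"
      "m F F = lcomb X Y w1 w2"
  shows "super_iso m (struct_mult k1 k2 k3 k4 k5 k6 k7 k8 a1 a2 c1 c2 w1 w2)"
proof -
  let ?n = "struct_mult k1 k2 k3 k4 k5 k6 k7 k8 a1 a2 c1 c2 w1 w2"
  note X = even_frameD(1)[OF fr] and Y = even_frameD(2)[OF fr] and XY = even_frameD(3)[OF fr]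
  define \<psi> where "\<psi> (v::sv) = v$1 *s X + v$2 *s Y + v$3 *s F" for v
  define \<phi> where "\<phi> (v::sv) = (vector [det2 v Y / det2 X Y, det2 X v / det2 X Y, v$3 / F$3] :: sv)" for v
  have \<phi>\<psi>: "\<phi> (\<psi> v) = v" for v
    using X Y F XY unfolding \<phi>_def \<psi>_def even_part_def odd_part_def det2_def
    by (simp add: vec_eq_iff forall_3 field_simps)
  have \<psi>\<phi>: "\<psi> (\<phi> v) = v" for v
    using X Y F XY unfolding \<phi>_def \<psi>_def even_part_def odd_part_def
    by (simp add: vec_eq_iff forall_3 field_simps) (simp add: det2_def algebra_simps)
  have "c_linear \<phi>"
    unfolding c_linear_def \<phi>_def det2_def
    by (simp add: vec_eq_iff forall_3 field_simps) (simp add: algebra_simps add_divide_distrib diff_divide_distrib)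
  moreover have "bij \<phi>"
    by (rule o_bij[of \<psi>]) (simp_all add: fun_eq_iff \<phi>\<psi> \<psi>\<phi>)
  moreover have "\<phi> v \<in> even_part \<longleftrightarrow> v \<in> even_part" "\<phi> v \<in> odd_part \<longleftrightarrow> v \<in> odd_part" for v
    using X Y F XY \<psi>\<phi>[of v] unfolding \<phi>_def \<psi>_def even_part_def odd_part_def det2_def
    by (auto simp: vec_eq_iff forall_3)
  then have "\<phi> -` even_part = even_part" "\<phi> -` odd_part = odd_part"
    by auto
  then have "\<phi> ` even_part = even_part" "\<phi> ` odd_part = odd_part"
    using surj_image_vimage_eq[OF bij_is_surj[OF \<open>bij \<phi>\<close>]] by metis+
  moreover have "\<phi> (m x y) = ?n (\<phi> x) (\<phi> y)" for x y
  proof -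
    have "\<psi> (?n a b) = m (\<psi> a) (\<psi> b)" for a b
      using even_frameD(4-7)[OF fr] prods
      unfolding \<psi>_def struct_mult_def lcomb_def
      by (simp add: superalgebra_bilinear[OF sa]) (simp add: vec_eq_iff algebra_simps)
    then show ?thesis by (metis \<phi>\<psi> \<psi>\<phi>)
  qed
  ultimately show ?thesis
    unfolding super_iso_def by blast
qed

lemma mult_of_R_tables:
  "mult_of R01 = struct_mult 1 0 0 0 0 0 0 1  0 0 0 0  0 0"
  "mult_of R02 = struct_mult 1 0 0 0 0 0 0 1  1 0 1 0  0 0"
  "mult_of R03 = struct_mult 1 0 0 0 0 0 0 1  1 0 1 0  1 0"
  "mult_of R04 = struct_mult 1 0 0 0 0 0 0 1  0 0 1 0  0 0"
  "mult_of R05 = struct_mult 1 0 0 0 0 0 0 1  1 0 0 0  0 0"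
  "mult_of R06 = struct_mult 1 0 0 0 0 0 0 1  1 0 0 0  1 0"
  "mult_of R07 = struct_mult 1 0 0 0 0 0 0 1  0 1 1 0  0 0"
  "mult_of R08 = struct_mult 1 0 0 0 0 0 0 1  0 1 1 0  0 1"
  "mult_of R09 = struct_mult 1 0 0 0 0 0 0 0  0 0 0 0  0 0"
  "mult_of R10 = struct_mult 1 0 0 0 0 0 0 0  0 0 0 0  0 1"
  "mult_of R11 = struct_mult 1 0 0 0 0 0 0 0  0 0 1 0  0 0"
  "mult_of R12 = struct_mult 1 0 0 0 0 0 0 0  0 0 1 0  0 1"
  "mult_of R13 = struct_mult 1 0 0 0 0 0 0 0  1 0 0 0  0 0"
  "mult_of R14 = struct_mult 1 0 0 0 0 0 0 0  1 0 0 0  1 0"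
  "mult_of R15 = struct_mult 1 0 0 0 0 0 0 0  1 0 1 0  0 0"
  "mult_of R16 = struct_mult 1 0 0 0 0 0 0 0  1 0 1 0  1 0"
  "mult_of R17 = struct_mult 1 0 0 1 0 1 0 0  0 0 0 0  0 0"
  "mult_of R18 = struct_mult 1 0 0 1 0 1 0 0  1 0 0 0  0 0"
  "mult_of R19 = struct_mult 1 0 0 1 0 1 0 0  1 0 0 0  0 1"
  "mult_of R20 = struct_mult 1 0 0 1 0 1 0 0  0 0 1 0  0 0"
  "mult_of R21 = struct_mult 1 0 0 1 0 1 0 0  1 0 1 0  0 0"
  "mult_of R22 = struct_mult 1 0 0 1 0 1 0 0  1 0 1 0  0 1"
  "mult_of R23 = struct_mult 1 0 0 1 0 0 0 0  0 0 0 0  0 0"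
  "mult_of R24 = struct_mult 1 0 0 1 0 0 0 0  0 0 0 0  0 1"
  "mult_of R25 = struct_mult 1 0 0 0 0 1 0 0  0 0 0 0  0 0"
  "mult_of R26 = struct_mult 1 0 0 0 0 1 0 0  1 0 0 0  0 0"
  "mult_of R27 = struct_mult 1 0 0 0 0 1 0 0  1 0 0 0  1 0"
  "mult_of R28 = struct_mult 1 0 0 0 0 1 0 0  1 0 0 0  0 1"
  "mult_of R29 = struct_mult 1 0 0 1 0 0 0 0  0 0 1 0  0 0"
  "mult_of R30 = struct_mult 1 0 0 1 0 0 0 0  0 0 1 0  0 1"
  "mult_of R31 = struct_mult 1 0 0 0 0 1 0 0  0 0 1 0  0 0"
  "mult_of R32 = struct_mult 1 0 0 1 0 0 0 0  1 0 0 0  0 0"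
  "mult_of R33 = struct_mult 1 0 0 0 0 1 0 0  1 0 1 0  0 0"
  "mult_of R34 = struct_mult 1 0 0 0 0 1 0 0  1 0 1 0  1 0"
  "mult_of R35 = struct_mult 1 0 0 0 0 1 0 0  1 0 1 0  0 1"
  "mult_of R36 = struct_mult 1 0 0 1 0 0 0 0  1 0 1 0  0 0"
  "mult_of R37 = struct_mult 0 1 0 0 0 0 0 0  0 0 0 0  0 0"
  "mult_of R38 = struct_mult 0 1 0 0 0 0 0 0  0 0 0 0  0 1"
  "mult_of R39 = struct_mult 0 0 0 0 0 0 0 0  0 0 0 0  1 0"
  by (simp_all add: fun_eq_iff vec_eq_iff forall_3 mult_of_def struct_mult_def axis_def
      R01_def R02_def R03_def R04_def R05_def R06_def R07_def R08_def R09_def R10_def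
      R11_def R12_def R13_def R14_def R15_def R16_def R17_def R18_def R19_def R20_def
      R21_def R22_def R23_def R24_def R25_def R26_def R27_def R28_def R29_def R30_def
      R31_def R32_def R33_def R34_def R35_def R36_def R37_def R38_def R39_def)

lemma idempotent_cases:
  fixes x :: "'a::idom"
  assumes "x * x = x"
  shows "x = 0 \<or> x = 1"
  using assms by (metis mult_cancel_left1)

text \<open>In order: C + C, C + 0, the dual numbers, e1 a left unit for e2, e1 a right unit for e2,
  the nilpotent algebra with e1 e1 = e2, and the zero algebra.\<close>
definition even_normal_form :: "(sv \<Rightarrow> sv \<Rightarrow> sv) \<Rightarrow> sv \<Rightarrow> sv \<Rightarrow> bool" where
  "even_normal_form m E1 E2 \<longleftrightarrow>
     even_frame m E1 E2 1 0 0 0 0 0 0 1 \<or> even_frame m E1 E2 1 0 0 0 0 0 0 0 \<or>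
     even_frame m E1 E2 1 0 0 1 0 1 0 0 \<or> even_frame m E1 E2 1 0 0 1 0 0 0 0 \<or>
     even_frame m E1 E2 1 0 0 0 0 1 0 0 \<or> even_frame m E1 E2 0 1 0 0 0 0 0 0 \<or>
     even_frame m E1 E2 0 0 0 0 0 0 0 0"

lemma power_basis_constants:
  assumes sa: "superalgebra m" and ra: "right_alternative m"
    and fr: "even_frame m x y 0 1 k3 k4 k5 k6 k7 k8"
  shows "k3 = k5" "k4 = k6" "k7 = k5 * k6" "k8 = k5 + k6 * k6"
proof -
  note dt = even_frameD(3)[OF fr]
  show "k3 = k5" "k4 = k6"
    using even_frame_right_alternative[OF ra fr, of 1 0 1 0]
    by (simp_all add: even_frame_mult[OF sa fr] lcomb_eq_iff[OF dt])
  then show "k7 = k5 * k6" "k8 = k5 + k6 * k6"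
    using even_frame_right_alternative[OF ra fr, of 0 1 1 0]
    by (simp_all add: even_frame_mult[OF sa fr] lcomb_eq_iff[OF dt] mult.commute)
qed

text \<open>In the basis x, x x the relation x (x x) = (r1 + r2) x x - r1 r2 x holds; its roots
  r1, r2 decide the normal form.\<close>
lemma even_normal_form_power_basis_roots:
  assumes sa: "superalgebra m"
    and fr: "even_frame m x y 0 1 (-r1*r2) (r1+r2) (-r1*r2) (r1+r2) ((-r1*r2)*(r1+r2)) (-r1*r2 + (r1+r2)*(r1+r2))"
    and r1: "r1 \<noteq> 0"
  shows "\<exists>E1 E2. even_normal_form m E1 E2"
proof (cases "r2 = 0")
  case True
  have "even_frame m (lcomb x y 0 (1/(r1*r1))) (lcomb x y 1 (-1/r1)) 1 0 0 0 0 0 0 0"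
    by (rule even_frame_change[OF sa fr]) (use r1 True in \<open>simp_all add: field_simps\<close>)
  then show ?thesis unfolding even_normal_form_def by blast
next
  case r2: False
  show ?thesis
  proof (cases "r2 = r1")
    case True
    have "even_frame m (lcomb x y (2/r1) (-1/(r1*r1))) (lcomb x y (-1) (1/r1)) 1 0 0 1 0 1 0 0"
      by (rule even_frame_change[OF sa fr]) (use r1 True in \<open>simp_all add: field_simps\<close>)
    then show ?thesis unfolding even_normal_form_def by blast
  next
    case False
    then have d: "r1 - r2 \<noteq> 0" by simp
    have "even_frame m (lcomb x y (-r2) 1) (lcomb x y (-r1) 1) (r1*(r1-r2)) 0 0 0 0 0 0 (-r2*(r1-r2))"
      by (rule even_frame_change[OF sa fr]) (use r1 r2 d in \<open>simp_all add: algebra_simps\<close>)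
    from even_frame_rescale[OF sa this] show ?thesis
      using r1 r2 d unfolding even_normal_form_def by auto
  qed
qed

lemma even_normal_form_power_basis:
  assumes sa: "superalgebra m" and ra: "right_alternative m" and x: "x \<in> even_part"
    and dx: "det2 x (m x x) \<noteq> 0"
  shows "\<exists>E1 E2. even_normal_form m E1 E2"
proof -
  obtain k1 k2 k3 k4 k5 k6 k7 k8 where fr0: "even_frame m x (m x x) k1 k2 k3 k4 k5 k6 k7 k8"
    using even_frame_exists[OF sa x superalgebra_grading(1)[OF sa x x] dx] by blast
  have "lcomb x (m x x) k1 k2 = lcomb x (m x x) 0 1"
    using even_frameD(4)[OF fr0] by (simp add: lcomb_def)
  then have fr1: "even_frame m x (m x x) 0 1 k3 k4 k5 k6 k7 k8"
    using fr0 lcomb_eq_iff[OF dx] by simp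
  obtain s where s: "s * s = k6 * k6 + 4 * k5"
    by (metis power2_csqrt power2_eq_square)
  define r1 where "r1 = (k6 + s) / 2"
  define r2 where "r2 = (k6 - s) / 2"
  have "k5 = - r1 * r2" "k6 = r1 + r2"
    unfolding r1_def r2_def using s by (simp_all add: field_simps)
  then have fr: "even_frame m x (m x x) 0 1 (-r1*r2) (r1+r2) (-r1*r2) (r1+r2)
      ((-r1*r2)*(r1+r2)) (-r1*r2 + (r1+r2)*(r1+r2))"
    using fr1 power_basis_constants[OF sa ra fr1] by simp
  moreover have "even_frame m x (m x x) 0 1 (-r2*r1) (r2+r1) (-r2*r1) (r2+r1)
      ((-r2*r1)*(r2+r1)) (-r2*r1 + (r2+r1)*(r2+r1))"
    using fr by (simp add: ac_simps)
  moreover have "even_frame m x (m x x) 0 1 0 0 0 0 0 0" if "r1 = 0" "r2 = 0"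
    using fr that by simp
  ultimately show ?thesis
    using even_normal_form_power_basis_roots[OF sa] unfolding even_normal_form_def by blast
qed

lemma even_normal_form_idempotent_annihilated:
  assumes sa: "superalgebra m" and ra: "right_alternative m"
    and fr: "even_frame m e n 1 0 a b 0 0 c d"
  shows "\<exists>E1 E2. even_normal_form m E1 E2"
proof -
  note dt = even_frameD(3)[OF fr]
  have een: "a = a * b" "b = b * b"
    using even_frame_assoc_antisym[OF ra fr, of 1 0 1 0 0 1] unfolding assoc_def
    by (simp_all add: even_frame_mult[OF sa fr] lcomb_diff lcomb_uminus lcomb_eq_iff[OF dt] algebra_simps)
  have nen: "c = b * c" "b * d = 0"
    using even_frame_assoc_antisym[OF ra fr, of 0 1 1 0 0 1] unfolding assoc_def
    by (simp_all add: even_frame_mult[OF sa fr] lcomb_diff lcomb_uminus lcomb_eq_iff[OF dt] algebra_simps)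
  have "c * a = 0" "c * b = 0"
    using even_frame_right_alternative[OF ra fr, of 0 1 0 1]
    by (simp_all add: even_frame_mult[OF sa fr] lcomb_eq_iff[OF dt] algebra_simps)
  moreover have "a * b = 0"
    using even_frame_right_alternative[OF ra fr, of 1 0 0 1]
    by (simp add: even_frame_mult[OF sa fr] lcomb_eq_iff[OF dt] algebra_simps)
  ultimately have "a = 0" "c = 0" using een nen by auto
  then have fr': "even_frame m e n 1 0 0 b 0 0 0 d" using fr by simp
  consider "b = 1" | "b = 0" using idempotent_cases[OF een(2)[symmetric]] by blast
  then show ?thesis
  proof cases
    case 1
    then show ?thesis using fr' nen(2) unfolding even_normal_form_def by auto
  next
    case 2
    show ?thesis
    proof (cases "d = 0")
      case True
      then show ?thesis using fr' 2 unfolding even_normal_form_def by auto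
    next
      case False
      have "even_frame m e n 1 0 0 0 0 0 0 d" using fr' 2 by simp
      from even_frame_rescale[OF sa this _ False] show ?thesis
        unfolding even_normal_form_def by auto
    qed
  qed
qed

lemma even_normal_form_idempotent_right_unit:
  assumes sa: "superalgebra m" and ra: "right_alternative m"
    and fr: "even_frame m e n 1 0 a b 0 1 c d"
    and parallel: "\<forall>x\<in>even_part. det2 x (m x x) = 0"
  shows "\<exists>E1 E2. even_normal_form m E1 E2"
proof -
  note dt = even_frameD(3)[OF fr]
  have sq: "det2 (lcomb e n p q) (m (lcomb e n p q) (lcomb e n p q)) = 0" for p q
    using parallel lcomb_even even_frameD(1,2)[OF fr] by blast
  have een: "a * b = 0" "b = b * b"
    using even_frame_assoc_antisym[OF ra fr, of 1 0 1 0 0 1] unfolding assoc_def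
    by (simp_all add: even_frame_mult[OF sa fr] lcomb_diff lcomb_uminus lcomb_eq_0_iff[OF dt]
        lcomb_eq_iff[OF dt] algebra_simps)
  have nen: "c = b * c" "d = a + b * d"
    using even_frame_assoc_antisym[OF ra fr, of 0 1 1 0 0 1] unfolding assoc_def
    by (simp_all add: even_frame_mult[OF sa fr] lcomb_diff lcomb_uminus lcomb_eq_0_iff[OF dt]
        lcomb_eq_iff[OF dt] algebra_simps)
  consider "b = 1" | "b = 0" using idempotent_cases[OF een(2)[symmetric]] by blast
  then show ?thesis
  proof cases
    case 1
    \<comment> \<open>Impossible: x x is not parallel to x for one of x = n, e + n, e + 2 n.\<close>
    then have a: "a = 0" using een by simp
    have c: "c = 0" using sq[of 0 1] dt by (simp add: even_frame_mult[OF sa fr] det2_lcomb a 1)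
    have "d = -1"
      using sq[of 1 1] dt by (simp add: even_frame_mult[OF sa fr] det2_lcomb a c 1 add_eq_0_iff)
    then show ?thesis using sq[of 1 2] dt by (simp add: even_frame_mult[OF sa fr] det2_lcomb a c 1)
  next
    case 2
    then have "even_frame m e n 1 0 a 0 0 1 0 a" using fr nen by simp
    then have "even_frame m (lcomb e n 1 0) (lcomb e n (-a) 1) 1 0 0 0 0 1 0 0"
      by (rule even_frame_change[OF sa]) (simp_all add: algebra_simps)
    then show ?thesis unfolding even_normal_form_def by blast
  qed
qed

lemma even_complement:
  assumes "e \<in> even_part" "e \<noteq> 0"
  obtains w where "w \<in> even_part" "det2 e w \<noteq> 0"
proof (cases "e$2 = 0")
  case True
  then have "e$1 \<noteq> 0" using assms unfolding even_part_def by (auto simp: vec_eq_iff forall_3)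
  then show ?thesis using that[of "axis 2 1"] True by (simp add: det2_def even_part_def axis_def)
next
  case False
  then show ?thesis using that[of "axis 1 1"] by (simp add: det2_def even_part_def axis_def)
qed

lemma even_normal_form_idempotent:
  assumes sa: "superalgebra m" and ra: "right_alternative m"
    and parallel: "\<forall>x\<in>even_part. det2 x (m x x) = 0"
    and e: "e \<in> even_part" "e \<noteq> 0" "m e e = e"
  shows "\<exists>E1 E2. even_normal_form m E1 E2"
proof -
  obtain w where w: "w \<in> even_part" "det2 e w \<noteq> 0" using even_complement[OF e(1,2)] .
  obtain k1 k2 k3 k4 k5 k6 k7 k8 where fr0: "even_frame m e w k1 k2 k3 k4 k5 k6 k7 k8"
    using even_frame_exists[OF sa e(1) w] by blast
  have "lcomb e w k1 k2 = lcomb e w 1 0" using even_frameD(4)[OF fr0] e(3) by (simp add: lcomb_def)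
  then have fr: "even_frame m e w 1 0 k3 k4 k5 k6 k7 k8" using fr0 lcomb_eq_iff[OF w(2)] by simp
  have nee: "k6 * k5 = 0" "k6 * k6 = k6"
    using even_frame_right_alternative[OF ra fr, of 0 1 1 0]
    by (simp_all add: even_frame_mult[OF sa fr] lcomb_eq_iff[OF w(2)] algebra_simps)
  consider "k6 = 1" | "k6 = 0" using idempotent_cases[OF nee(2)] by blast
  then show ?thesis
  proof cases
    case 1
    then have "even_frame m e w 1 0 k3 k4 0 1 k7 k8" using fr nee(1) by simp
    then show ?thesis using even_normal_form_idempotent_right_unit[OF sa ra _ parallel] by blast
  next
    case 2
    \<comment> \<open>w - k5 e is annihilated by e from the right.\<close>
    have "det2 (lcomb e w 1 0) (lcomb e w (-k5) 1) \<noteq> 0" using w(2) by (simp add: det2_lcomb)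
    then obtain l1 l2 l3 l4 l5 l6 l7 l8
      where fr2: "even_frame m (lcomb e w 1 0) (lcomb e w (-k5) 1) l1 l2 l3 l4 l5 l6 l7 l8"
      using even_frame_exists[OF sa lcomb_even[OF e(1) w(1)] lcomb_even[OF e(1) w(1)]] by blast
    have "l1 = 1 \<and> l2 = 0 \<and> l5 = 0 \<and> l6 = 0"
      using even_frameD(4,6)[OF fr2] 2
      by (simp add: even_frame_mult[OF sa fr] lcomb_lcomb lcomb_eq_iff[OF w(2)]) auto
    then show ?thesis
      using fr2 even_normal_form_idempotent_annihilated[OF sa ra] by auto
  qed
qed

lemma even_normal_form_square_zero:
  assumes sa: "superalgebra m" and ra: "right_alternative m"
    and sq: "\<forall>x\<in>even_part. m x x = 0"
  shows "\<exists>E1 E2. even_normal_form m E1 E2"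
proof -
  define e1 e2 :: sv where "e1 = axis 1 1" and "e2 = axis 2 1"
  have b: "e1 \<in> even_part" "e2 \<in> even_part" and dt: "det2 e1 e2 \<noteq> 0"
    by (auto simp: e1_def e2_def even_part_def det2_def axis_def)
  obtain k1 k2 k3 k4 k5 k6 k7 k8 where fr0: "even_frame m e1 e2 k1 k2 k3 k4 k5 k6 k7 k8"
    using even_frame_exists[OF sa b dt] by blast
  have "k1 = 0 \<and> k2 = 0 \<and> k7 = 0 \<and> k8 = 0"
    using even_frameD(4,7)[OF fr0] sq b by (auto simp: lcomb_eq_0_iff[OF dt])
  then have fr: "even_frame m e1 e2 0 0 k3 k4 k5 k6 0 0" using fr0 by simp
  have "m (lcomb e1 e2 1 1) (lcomb e1 e2 1 1) = 0" using sq lcomb_even[OF b] by blast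
  then have "k3 + k5 = 0" "k4 + k6 = 0"
    by (simp_all add: even_frame_mult[OF sa fr] lcomb_eq_0_iff[OF dt])
  moreover have "k3 * k3 = 0"
    using even_frame_right_alternative[OF ra fr, of 1 0 0 1]
    by (simp add: even_frame_mult[OF sa fr] lcomb_eq_iff[OF dt])
  moreover have "k6 * k6 = 0"
    using even_frame_right_alternative[OF ra fr, of 0 1 1 0]
    by (simp add: even_frame_mult[OF sa fr] lcomb_eq_iff[OF dt])
  ultimately have "even_frame m e1 e2 0 0 0 0 0 0 0 0" using fr
    by (simp add: add_eq_0_iff)
  then show ?thesis unfolding even_normal_form_def by blast
qed

lemma even_parallel:
  assumes x: "x \<in> even_part" "x \<noteq> 0" and z: "z \<in> even_part" and d: "det2 x z = 0"
  obtains c where "z = c *s x"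
proof (cases "x$1 = 0")
  case True
  then have x2: "x$2 \<noteq> 0" using x unfolding even_part_def by (auto simp: vec_eq_iff forall_3)
  have "z$1 = 0" using d True x2 unfolding det2_def by simp
  then show ?thesis using that[of "z$2 / x$2"] x2 x z True unfolding even_part_def
    by (auto simp: vec_eq_iff forall_3)
next
  case False
  have "z$2 = z$1 / x$1 * x$2" using d False unfolding det2_def by (simp add: field_simps)
  then show ?thesis using that[of "z$1 / x$1"] False x z unfolding even_part_def
    by (auto simp: vec_eq_iff forall_3)
qed

lemma even_normal_form_exists:
  assumes sa: "superalgebra m" and ra: "right_alternative m"
  shows "\<exists>E1 E2. even_normal_form m E1 E2"
proof (cases "\<exists>x\<in>even_part. det2 x (m x x) \<noteq> 0")
  case True
  then show ?thesis using even_normal_form_power_basis[OF sa ra] by blast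
next
  case False
  then have parallel: "\<forall>x\<in>even_part. det2 x (m x x) = 0" by blast
  show ?thesis
  proof (cases "\<exists>x\<in>even_part. \<exists>c. c \<noteq> 0 \<and> x \<noteq> 0 \<and> m x x = c *s x")
    case True
    then obtain x c where x: "x \<in> even_part" "c \<noteq> 0" "x \<noteq> 0" "m x x = c *s x" by blast
    have "(1/c) *s x \<in> even_part" "(1/c) *s x \<noteq> 0" "m ((1/c) *s x) ((1/c) *s x) = (1/c) *s x"
      using x by (auto simp: even_part_def superalgebra_bilinear[OF sa] vec_eq_iff)
    then show ?thesis using even_normal_form_idempotent[OF sa ra parallel] by blast
  next
    case False
    have "m x x = 0" if x: "x \<in> even_part" for x
    proof (cases "x = 0")
      case True
      then show ?thesis using superalgebra_zero[OF sa] by simp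
    next
      case nz: False
      obtain c where "m x x = c *s x"
        using even_parallel[OF x nz superalgebra_grading(1)[OF sa x x]] parallel x by blast
      then show ?thesis using False x nz by (cases "c = 0") auto
    qed
    then show ?thesis using even_normal_form_square_zero[OF sa ra] by blast
  qed
qed

definition f1 :: sv where
  "f1 = axis 3 1"

definition odd_left :: "(sv \<Rightarrow> sv \<Rightarrow> sv) \<Rightarrow> sv \<Rightarrow> complex" where
  "odd_left m z = m z f1 $ 3"

definition odd_right :: "(sv \<Rightarrow> sv \<Rightarrow> sv) \<Rightarrow> sv \<Rightarrow> complex" where
  "odd_right m z = m f1 z $ 3"

lemma f1_odd: "f1 \<in> odd_part"
  unfolding f1_def odd_part_def by (simp add: axis_def)

lemma odd_part_multiple_f1: "v \<in> odd_part \<Longrightarrow> v = v$3 *s f1"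
  unfolding odd_part_def f1_def by (auto simp: vec_eq_iff forall_3 axis_def)

lemma mult_even_f1: "superalgebra m \<Longrightarrow> z \<in> even_part \<Longrightarrow> m z f1 = odd_left m z *s f1"
  unfolding odd_left_def using odd_part_multiple_f1 superalgebra_grading(2) f1_odd by blast

lemma mult_f1_even: "superalgebra m \<Longrightarrow> z \<in> even_part \<Longrightarrow> m f1 z = odd_right m z *s f1"
  unfolding odd_right_def using odd_part_multiple_f1 superalgebra_grading(3) f1_odd by blast

lemma odd_left_lcomb:
  "superalgebra m \<Longrightarrow> odd_left m (lcomb x y a b) = a * odd_left m x + b * odd_left m y"
  unfolding odd_left_def lcomb_def by (simp add: superalgebra_bilinear)

lemma odd_right_lcomb:
  "superalgebra m \<Longrightarrow> odd_right m (lcomb x y a b) = a * odd_right m x + b * odd_right m y"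
  unfolding odd_right_def lcomb_def by (simp add: superalgebra_bilinear)

lemma odd_left_zero: "superalgebra m \<Longrightarrow> odd_left m 0 = 0"
  unfolding odd_left_def by (simp add: superalgebra_zero)

lemma odd_right_zero: "superalgebra m \<Longrightarrow> odd_right m 0 = 0"
  unfolding odd_right_def by (simp add: superalgebra_zero)

lemma odd_left_mult:
  assumes sa: "superalgebra m" and ra: "right_alternative m"
    and x: "x \<in> even_part" and z: "z \<in> even_part"
  shows "odd_left m (m x z) = odd_left m x * odd_left m z"
proof -
  have "assoc m x f1 z = - assoc m x z f1"
    using right_alternative_odd_even[OF ra _ f1_odd z] x by blast
  then have "assoc m x f1 z $ 3 = (- assoc m x z f1) $ 3" by simp
  then show ?thesis
    unfolding assoc_def
    using mult_even_f1[OF sa x] mult_f1_even[OF sa z] mult_even_f1[OF sa z]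
      mult_even_f1[OF sa superalgebra_grading(1)[OF sa x z]]
    by (simp add: superalgebra_bilinear[OF sa] f1_def mult.commute)
qed

lemma odd_right_mult:
  assumes sa: "superalgebra m" and ra: "right_alternative m"
    and y: "y \<in> even_part" and z: "z \<in> even_part"
  shows "odd_right m (m y z) + odd_right m (m z y) = 2 * odd_right m y * odd_right m z"
proof -
  have "assoc m f1 y z = - assoc m f1 z y"
    using right_alternative_even_even[OF ra _ y z] f1_odd by blast
  then have "assoc m f1 y z $ 3 = (- assoc m f1 z y) $ 3" by simp
  then show ?thesis
    unfolding assoc_def
    using mult_f1_even[OF sa y] mult_f1_even[OF sa z]
      mult_f1_even[OF sa superalgebra_grading(1)[OF sa y z]]
      mult_f1_even[OF sa superalgebra_grading(1)[OF sa z y]]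
    by (simp add: superalgebra_bilinear[OF sa] f1_def algebra_simps)
qed

lemma mult_square_f1:
  assumes sa: "superalgebra m" and ra: "right_alternative m" and z: "z \<in> even_part"
  shows "m (m f1 f1) z = odd_left m z *s m f1 f1"
proof -
  have "assoc m f1 f1 z = - assoc m f1 z f1"
    using right_alternative_odd_even[OF ra _ f1_odd z] f1_odd by blast
  then show ?thesis
    unfolding assoc_def using mult_f1_even[OF sa z] mult_even_f1[OF sa z]
    by (simp add: superalgebra_bilinear[OF sa] vec_eq_iff forall_3 algebra_simps)
qed

lemma even_frame_odd_left:
  assumes sa: "superalgebra m" and ra: "right_alternative m"
    and fr: "even_frame m E1 E2 k1 k2 k3 k4 k5 k6 k7 k8"
  shows "k1 * odd_left m E1 + k2 * odd_left m E2 = odd_left m E1 * odd_left m E1"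
    "k3 * odd_left m E1 + k4 * odd_left m E2 = odd_left m E1 * odd_left m E2"
    "k5 * odd_left m E1 + k6 * odd_left m E2 = odd_left m E2 * odd_left m E1"
    "k7 * odd_left m E1 + k8 * odd_left m E2 = odd_left m E2 * odd_left m E2"
  using odd_left_mult[OF sa ra, of E1 E1] odd_left_mult[OF sa ra, of E1 E2]
    odd_left_mult[OF sa ra, of E2 E1] odd_left_mult[OF sa ra, of E2 E2] even_frameD[OF fr]
  by (simp_all add: odd_left_lcomb[OF sa])

lemma odd_right_square:
  assumes "superalgebra m" and "right_alternative m" and "y \<in> even_part"
  shows "odd_right m (m y y) = odd_right m y * odd_right m y"
  using odd_right_mult[OF assms assms(3)] by (simp add: field_simps)

lemma even_frame_odd_right:
  assumes sa: "superalgebra m" and ra: "right_alternative m"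
    and fr: "even_frame m E1 E2 k1 k2 k3 k4 k5 k6 k7 k8"
  shows "k1 * odd_right m E1 + k2 * odd_right m E2 = odd_right m E1 * odd_right m E1"
    "(k3 + k5) * odd_right m E1 + (k4 + k6) * odd_right m E2 = 2 * odd_right m E1 * odd_right m E2"
    "k7 * odd_right m E1 + k8 * odd_right m E2 = odd_right m E2 * odd_right m E2"
  using odd_right_square[OF sa ra, of E1] odd_right_mult[OF sa ra, of E1 E2]
    odd_right_square[OF sa ra, of E2] even_frameD[OF fr]
  by (simp_all add: odd_right_lcomb[OF sa] algebra_simps)

lemma even_frame_square_f1:
  assumes sa: "superalgebra m" and ra: "right_alternative m"
    and fr: "even_frame m E1 E2 k1 k2 k3 k4 k5 k6 k7 k8" and u: "m f1 f1 = lcomb E1 E2 q1 q2"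
  shows "q1 * k1 + q2 * k5 = odd_left m E1 * q1" "q1 * k2 + q2 * k6 = odd_left m E1 * q2"
    "q1 * k3 + q2 * k7 = odd_left m E2 * q1" "q1 * k4 + q2 * k8 = odd_left m E2 * q2"
proof -
  note dt = even_frameD(3)[OF fr]
  have "m (lcomb E1 E2 q1 q2) (lcomb E1 E2 1 0) = lcomb E1 E2 (odd_left m E1 * q1) (odd_left m E1 * q2)"
    "m (lcomb E1 E2 q1 q2) (lcomb E1 E2 0 1) = lcomb E1 E2 (odd_left m E2 * q1) (odd_left m E2 * q2)"
    using mult_square_f1[OF sa ra even_frameD(1)[OF fr]] mult_square_f1[OF sa ra even_frameD(2)[OF fr]]
    unfolding u by (simp_all add: lcomb_def vec_eq_iff)
  then show "q1 * k1 + q2 * k5 = odd_left m E1 * q1" "q1 * k2 + q2 * k6 = odd_left m E1 * q2"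
    "q1 * k3 + q2 * k7 = odd_left m E2 * q1" "q1 * k4 + q2 * k8 = odd_left m E2 * q2"
    by (simp_all add: even_frame_mult[OF sa fr] lcomb_eq_iff[OF dt])
qed

lemma R_list_iso_of_frame:
  assumes sa: "superalgebra m" and fr: "even_frame m X Y k1 k2 k3 k4 k5 k6 k7 k8"
    and u: "m f1 f1 = lcomb X Y w1 w2" and t: "t \<noteq> 0"
    and "struct_mult k1 k2 k3 k4 k5 k6 k7 k8 (odd_left m X) (odd_left m Y) (odd_right m X)
      (odd_right m Y) (t * t * w1) (t * t * w2) \<in> mult_of ` set R_list"
  shows "\<exists>T\<in>set R_list. super_iso m (mult_of T)"
proof -
  have "super_iso m (struct_mult k1 k2 k3 k4 k5 k6 k7 k8 (odd_left m X) (odd_left m Y)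
      (odd_right m X) (odd_right m Y) (t * t * w1) (t * t * w2))"
  proof (rule super_iso_struct_mult[OF sa fr])
    have X: "X \<in> even_part" and Y: "Y \<in> even_part" using even_frameD[OF fr] by simp_all
    show "t *s f1 \<in> odd_part" "(t *s f1) $ 3 \<noteq> 0"
      using t by (simp_all add: f1_def odd_part_def axis_def)
    show "m X (t *s f1) = odd_left m X *s (t *s f1)" "m Y (t *s f1) = odd_left m Y *s (t *s f1)"
      "m (t *s f1) X = odd_right m X *s (t *s f1)" "m (t *s f1) Y = odd_right m Y *s (t *s f1)"
      using mult_even_f1[OF sa X] mult_even_f1[OF sa Y] mult_f1_even[OF sa X] mult_f1_even[OF sa Y]
      by (simp_all add: superalgebra_bilinear[OF sa] mult.commute)
    show "m (t *s f1) (t *s f1) = lcomb X Y (t * t * w1) (t * t * w2)"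
      using u by (simp add: superalgebra_bilinear[OF sa] lcomb_def vec_eq_iff algebra_simps)
  qed
  then show ?thesis using assms(5) by auto
qed

lemma square_normalizer:
  fixes q :: complex
  obtains t where "t \<noteq> 0" "t * t * q = (if q = 0 then 0 else 1)"
proof (cases "q = 0")
  case True
  then show ?thesis using that[of 1] by simp
next
  case False
  then have "csqrt q \<noteq> 0" "csqrt q * csqrt q = q"
    by (simp_all flip: power2_eq_square)
  then show ?thesis using that[of "1 / csqrt q"] False by (simp add: field_simps)
qed

lemma even_frame_square_f1_coords:
  assumes "superalgebra m" and "even_frame m E1 E2 k1 k2 k3 k4 k5 k6 k7 k8"
  obtains q1 q2 where "m f1 f1 = lcomb E1 E2 q1 q2"
  using even_in_span[OF even_frameD(1,2)[OF assms(2)] superalgebra_grading(4)[OF assms(1) f1_odd f1_odd]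
      even_frameD(3)[OF assms(2)]] .

lemma R_list_over_two_idempotents_odd_left_zero:
  assumes sa: "superalgebra m" and ra: "right_alternative m"
    and fr: "even_frame m E1 E2 1 0 0 0 0 0 0 1" and l2: "odd_left m E2 = 0"
  shows "\<exists>T\<in>set R_list. super_iso m (mult_of T)"
proof -
  obtain q1 q2 where u: "m f1 f1 = lcomb E1 E2 q1 q2"
    using even_frame_square_f1_coords[OF sa fr] .
  have frs: "even_frame m E2 E1 1 0 0 0 0 0 0 1" and us: "m f1 f1 = lcomb E2 E1 q2 q1"
    using even_frame_swap[OF fr] u lcomb_swap by simp_all
  note left = even_frame_odd_left[OF sa ra fr] and right = even_frame_odd_right[OF sa ra fr]
    and square = even_frame_square_f1[OF sa ra fr u]
  obtain t where t: "t \<noteq> 0" "t * t * q1 = (if q1 = 0 then 0 else 1)"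
    using square_normalizer .
  let ?S = "\<lambda>X Y w1 w2. struct_mult 1 0 0 0 0 0 0 1 (odd_left m X) (odd_left m Y)
    (odd_right m X) (odd_right m Y) (t * t * w1) (t * t * w2)"
  have "q2 = 0" "q1 = 0 \<or> odd_left m E1 = 1" "odd_right m E1 = 0 \<or> odd_right m E2 = 0"
    using l2 right(2) square(1,4) by simp_all
  moreover have "odd_left m E1 = 0 \<or> odd_left m E1 = 1"
    "odd_right m E1 = 0 \<or> odd_right m E1 = 1" "odd_right m E2 = 0 \<or> odd_right m E2 = 1"
    using idempotent_cases left(1) right(1,3) by simp_all
  \<comment> \<open>Some of the cases occur in R_list only after exchanging E1 and E2.\<close>
  ultimately have "?S E1 E2 q1 q2 \<in> mult_of ` set R_list \<or> ?S E2 E1 q2 q1 \<in> mult_of ` set R_list"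
    using l2 t(2) by (elim disjE) (simp_all add: R_list_def mult_of_R_tables)
  then show ?thesis
    using R_list_iso_of_frame[OF sa fr u t(1)] R_list_iso_of_frame[OF sa frs us t(1)] by blast
qed

lemma R_list_over_two_idempotents:
  assumes sa: "superalgebra m" and ra: "right_alternative m"
    and fr: "even_frame m E1 E2 1 0 0 0 0 0 0 1"
  shows "\<exists>T\<in>set R_list. super_iso m (mult_of T)"
proof -
  have "odd_left m E1 = 0 \<or> odd_left m E2 = 0"
    using even_frame_odd_left(2)[OF sa ra fr] by simp
  then show ?thesis
    using R_list_over_two_idempotents_odd_left_zero[OF sa ra fr]
      R_list_over_two_idempotents_odd_left_zero[OF sa ra even_frame_swap[OF fr]] by blast
qed

lemma R_list_over_idempotent_and_zero:
  assumes sa: "superalgebra m" and ra: "right_alternative m"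
    and fr: "even_frame m E1 E2 1 0 0 0 0 0 0 0"
  shows "\<exists>T\<in>set R_list. super_iso m (mult_of T)"
proof -
  obtain q1 q2 where u: "m f1 f1 = lcomb E1 E2 q1 q2"
    using even_frame_square_f1_coords[OF sa fr] .
  note left = even_frame_odd_left[OF sa ra fr] and right = even_frame_odd_right[OF sa ra fr]
    and square = even_frame_square_f1[OF sa ra fr u]
  obtain t where t: "t \<noteq> 0" "t * t * (q1 + q2) = (if q1 + q2 = 0 then 0 else 1)"
    using square_normalizer .
  have "odd_left m E2 = 0" "odd_right m E2 = 0" "q1 = 0 \<or> odd_left m E1 = 1" "odd_left m E1 = 0 \<or> q2 = 0"
    using left(4) right(3) square(1,2) by simp_all
  moreover have "odd_left m E1 = 0 \<or> odd_left m E1 = 1" "odd_right m E1 = 0 \<or> odd_right m E1 = 1"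
    using idempotent_cases left(1) right(1) by simp_all
  ultimately have "struct_mult 1 0 0 0 0 0 0 0 (odd_left m E1) (odd_left m E2) (odd_right m E1)
      (odd_right m E2) (t * t * q1) (t * t * q2) \<in> mult_of ` set R_list"
    using t(2) by (elim disjE) (simp_all add: R_list_def mult_of_R_tables)
  then show ?thesis by (rule R_list_iso_of_frame[OF sa fr u t(1)])
qed

lemma R_list_over_dual_numbers:
  assumes sa: "superalgebra m" and ra: "right_alternative m"
    and fr: "even_frame m E1 E2 1 0 0 1 0 1 0 0"
  shows "\<exists>T\<in>set R_list. super_iso m (mult_of T)"
proof -
  obtain q1 q2 where u: "m f1 f1 = lcomb E1 E2 q1 q2"
    using even_frame_square_f1_coords[OF sa fr] .
  note left = even_frame_odd_left[OF sa ra fr] and right = even_frame_odd_right[OF sa ra fr]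
    and square = even_frame_square_f1[OF sa ra fr u]
  obtain t where t: "t \<noteq> 0" "t * t * q2 = (if q2 = 0 then 0 else 1)"
    using square_normalizer .
  have "odd_left m E2 = 0" "odd_right m E2 = 0" "q1 = 0" "q2 = 0 \<or> odd_left m E1 = 1"
    using left(4) right(3) square(2,4) by simp_all
  moreover have "odd_left m E1 = 0 \<or> odd_left m E1 = 1" "odd_right m E1 = 0 \<or> odd_right m E1 = 1"
    using idempotent_cases left(1) right(1) by simp_all
  ultimately have "struct_mult 1 0 0 1 0 1 0 0 (odd_left m E1) (odd_left m E2) (odd_right m E1)
      (odd_right m E2) (t * t * q1) (t * t * q2) \<in> mult_of ` set R_list"
    using t(2) by (elim disjE) (simp_all add: R_list_def mult_of_R_tables)
  then show ?thesis by (rule R_list_iso_of_frame[OF sa fr u t(1)])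
qed

lemma R_list_over_left_unit:
  assumes sa: "superalgebra m" and ra: "right_alternative m"
    and fr: "even_frame m E1 E2 1 0 0 1 0 0 0 0"
  shows "\<exists>T\<in>set R_list. super_iso m (mult_of T)"
proof -
  obtain q1 q2 where u: "m f1 f1 = lcomb E1 E2 q1 q2"
    using even_frame_square_f1_coords[OF sa fr] .
  note left = even_frame_odd_left[OF sa ra fr] and right = even_frame_odd_right[OF sa ra fr]
    and square = even_frame_square_f1[OF sa ra fr u]
  obtain t where t: "t \<noteq> 0" "t * t * q2 = (if q2 = 0 then 0 else 1)"
    using square_normalizer .
  have "odd_left m E2 = 0" "odd_right m E2 = 0" "q1 = 0" "odd_left m E1 = 0 \<or> q2 = 0"
    using left(4) right(3) square(2,4) by simp_all
  moreover have "odd_left m E1 = 0 \<or> odd_left m E1 = 1" "odd_right m E1 = 0 \<or> odd_right m E1 = 1"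
    using idempotent_cases left(1) right(1) by simp_all
  ultimately have "struct_mult 1 0 0 1 0 0 0 0 (odd_left m E1) (odd_left m E2) (odd_right m E1)
      (odd_right m E2) (t * t * q1) (t * t * q2) \<in> mult_of ` set R_list"
    using t(2) by (elim disjE) (simp_all add: R_list_def mult_of_R_tables)
  then show ?thesis by (rule R_list_iso_of_frame[OF sa fr u t(1)])
qed

lemma R_list_over_right_unit:
  assumes sa: "superalgebra m" and ra: "right_alternative m"
    and fr: "even_frame m E1 E2 1 0 0 0 0 1 0 0"
  shows "\<exists>T\<in>set R_list. super_iso m (mult_of T)"
proof -
  obtain q1 q2 where u: "m f1 f1 = lcomb E1 E2 q1 q2"
    using even_frame_square_f1_coords[OF sa fr] .
  note left = even_frame_odd_left[OF sa ra fr] and right = even_frame_odd_right[OF sa ra fr]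
    and square = even_frame_square_f1[OF sa ra fr u]
  have c: "odd_left m E2 = 0" "odd_right m E2 = 0" "q1 = 0 \<or> odd_left m E1 = 1" "q2 = 0 \<or> odd_left m E1 = 1"
    using left(4) right(3) square(1,2) by simp_all
  have l: "odd_left m E1 = 0 \<or> odd_left m E1 = 1" and r: "odd_right m E1 = 0 \<or> odd_right m E1 = 1"
    using idempotent_cases left(1) right(1) by simp_all
  show ?thesis
  proof (cases "q1 = 0")
    case True
    obtain t where t: "t \<noteq> 0" "t * t * q2 = (if q2 = 0 then 0 else 1)"
      using square_normalizer .
    have "struct_mult 1 0 0 0 0 1 0 0 (odd_left m E1) (odd_left m E2) (odd_right m E1)
        (odd_right m E2) (t * t * q1) (t * t * q2) \<in> mult_of ` set R_list"
      using c l r True t(2) by (elim disjE) (simp_all add: R_list_def mult_of_R_tables)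
    then show ?thesis by (rule R_list_iso_of_frame[OF sa fr u t(1)])
  next
    case False
    \<comment> \<open>Replacing E1 by E1 + (q2/q1) E2 keeps the structure constants and moves f1 f1 onto E1.\<close>
    define E1' where "E1' = lcomb E1 E2 1 (q2 / q1)"
    have "even_frame m E1' (lcomb E1 E2 0 1) 1 0 0 0 0 1 0 0"
      unfolding E1'_def by (rule even_frame_change[OF sa fr]) simp_all
    then have fr': "even_frame m E1' E2 1 0 0 0 0 1 0 0"
      by (simp add: lcomb_def)
    have u': "m f1 f1 = lcomb E1' E2 q1 0"
      using u False unfolding E1'_def lcomb_def by (simp add: vec_eq_iff field_simps)
    obtain t where t: "t \<noteq> 0" "t * t * q1 = (if q1 = 0 then 0 else 1)"
      using square_normalizer .
    have "odd_left m E1' = 1" "odd_right m E1' = odd_right m E1"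
      using c False unfolding E1'_def by (simp_all add: odd_left_lcomb[OF sa] odd_right_lcomb[OF sa])
    then have "struct_mult 1 0 0 0 0 1 0 0 (odd_left m E1') (odd_left m E2) (odd_right m E1')
        (odd_right m E2) (t * t * q1) (t * t * 0) \<in> mult_of ` set R_list"
      using c r False t(2) by (elim disjE) (simp_all add: R_list_def mult_of_R_tables)
    then show ?thesis by (rule R_list_iso_of_frame[OF sa fr' u' t(1)])
  qed
qed

lemma R_list_over_nilpotent:
  assumes sa: "superalgebra m" and ra: "right_alternative m"
    and fr: "even_frame m E1 E2 0 1 0 0 0 0 0 0"
  shows "\<exists>T\<in>set R_list. super_iso m (mult_of T)"
proof -
  obtain q1 q2 where u: "m f1 f1 = lcomb E1 E2 q1 q2"
    using even_frame_square_f1_coords[OF sa fr] .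
  note left = even_frame_odd_left[OF sa ra fr] and right = even_frame_odd_right[OF sa ra fr]
    and square = even_frame_square_f1[OF sa ra fr u]
  obtain t where t: "t \<noteq> 0" "t * t * q2 = (if q2 = 0 then 0 else 1)"
    using square_normalizer .
  have "odd_left m E2 = 0" "odd_right m E2 = 0"
    using left(4) right(3) by simp_all
  moreover from this have "odd_left m E1 = 0" "odd_right m E1 = 0"
    using left(1) right(1) by simp_all
  moreover from this have "q1 = 0"
    using square(2) by simp
  ultimately have "struct_mult 0 1 0 0 0 0 0 0 (odd_left m E1) (odd_left m E2) (odd_right m E1)
      (odd_right m E2) (t * t * q1) (t * t * q2) \<in> mult_of ` set R_list"
    using t(2) by (simp add: R_list_def mult_of_R_tables)
  then show ?thesis by (rule R_list_iso_of_frame[OF sa fr u t(1)])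
qed

lemma trivial_if_basis_products_vanish:
  assumes sa: "superalgebra m"
    and even: "\<And>x y. x \<in> even_part \<Longrightarrow> y \<in> even_part \<Longrightarrow> m x y = 0"
    and left: "\<And>x. x \<in> even_part \<Longrightarrow> m x f1 = 0" and right: "\<And>x. x \<in> even_part \<Longrightarrow> m f1 x = 0"
    and square: "m f1 f1 = 0"
  shows "trivial m"
  unfolding trivial_def
proof (intro allI)
  fix x y :: sv
  define x0 y0 where "x0 = x - x$3 *s f1" and "y0 = y - y$3 *s f1"
  have "x0 \<in> even_part" "y0 \<in> even_part"
    unfolding x0_def y0_def by (simp_all add: even_part_def f1_def)
  moreover have "m x y = m (x0 + x$3 *s f1) (y0 + y$3 *s f1)"
    unfolding x0_def y0_def by simp
  ultimately show "m x y = 0"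
    by (simp add: superalgebra_bilinear[OF sa] even left right square)
qed

lemma R_list_over_zero_algebra:
  assumes sa: "superalgebra m" and ra: "right_alternative m"
    and fr: "even_frame m E1 E2 0 0 0 0 0 0 0 0" and nontrivial: "\<not> trivial m"
  shows "\<exists>T\<in>set R_list. super_iso m (mult_of T)"
proof -
  have even: "m x y = 0" if x: "x \<in> even_part" and y: "y \<in> even_part" for x y
  proof -
    obtain a b where "x = lcomb E1 E2 a b"
      using even_in_span[OF even_frameD(1,2)[OF fr] x even_frameD(3)[OF fr]] .
    moreover obtain c d where "y = lcomb E1 E2 c d"
      using even_in_span[OF even_frameD(1,2)[OF fr] y even_frameD(3)[OF fr]] .
    ultimately show ?thesis by (simp add: even_frame_mult[OF sa fr]) (simp add: lcomb_def)
  qed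
  have odd_zero: "odd_left m x = 0" "odd_right m x = 0" if "x \<in> even_part" for x
    using odd_left_mult[OF sa ra that that] odd_right_square[OF sa ra that]
    by (simp_all add: even that odd_left_zero[OF sa] odd_right_zero[OF sa])
  then have "m x f1 = 0" "m f1 x = 0" if "x \<in> even_part" for x
    using that mult_even_f1[OF sa that] mult_f1_even[OF sa that] by simp_all
  then have "m f1 f1 \<noteq> 0"
    using nontrivial trivial_if_basis_products_vanish[OF sa even] by blast
  moreover have u_even: "m f1 f1 \<in> even_part"
    using superalgebra_grading(4)[OF sa f1_odd f1_odd] .
  ultimately obtain w where w: "w \<in> even_part" "det2 (m f1 f1) w \<noteq> 0"
    using even_complement by blast
  have fr': "even_frame m (m f1 f1) w 0 0 0 0 0 0 0 0"
    using u_even w even unfolding even_frame_def lcomb_def by simp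
  have u': "m f1 f1 = lcomb (m f1 f1) w 1 0"
    unfolding lcomb_def by simp
  have "struct_mult 0 0 0 0 0 0 0 0 (odd_left m (m f1 f1)) (odd_left m w) (odd_right m (m f1 f1))
      (odd_right m w) (1 * 1 * 1) (1 * 1 * 0) \<in> mult_of ` set R_list"
    using odd_zero u_even w(1) by (simp add: R_list_def mult_of_R_tables)
  then show ?thesis by (rule R_list_iso_of_frame[OF sa fr' u' one_neq_zero])
qed

theorem theoremA2:
  fixes m :: "sv \<Rightarrow> sv \<Rightarrow> sv"
  assumes "superalgebra m" and "right_alternative m" and "\<not> trivial m"
  shows "\<exists>T \<in> set R_list. super_iso m (mult_of T)"
proof -
  obtain E1 E2 where "even_normal_form m E1 E2"
    using even_normal_form_exists[OF assms(1,2)] by blast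
  then show ?thesis
    unfolding even_normal_form_def
    using R_list_over_two_idempotents[OF assms(1,2)] R_list_over_idempotent_and_zero[OF assms(1,2)]
      R_list_over_dual_numbers[OF assms(1,2)] R_list_over_left_unit[OF assms(1,2)]
      R_list_over_right_unit[OF assms(1,2)] R_list_over_nilpotent[OF assms(1,2)]
      R_list_over_zero_algebra[OF assms(1,2) _ assms(3)] by blast
qed

end
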